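(* Let $f=Mh\in\mathbb C[U_1,\ldots,U_n]$, where $M$ is a monomial $U_1^{\alpha_1}\cdots U_n^{\alpha_n}$ and $h\in\mathbb C[U_1,\ldots,U_n]$ has nonzero constant term. Then there exists $m\ge1$ with $\mathcal L(f^m)\neq0$. (Equivalently: if $f$ is of this form with $\mathcal L(f^m)=0$ for all $m\ge 1$, then $f=0$, which is impossible; so no such $f$ exists.)
   Context: $\mathcal L:\mathbb C[U_1,\ldots,U_n]\to\mathbb C$ is the $\mathbb C$-linear map defined on monomials by $\mathcal L(U_1^{\ell_1}\cdots U_n^{\ell_n})=\ell_1!\cdots\ell_n!$. *)

theory Defs
  imports Complex_Main "HOL-Library.Poly_Mapping"
begin

text \<open>Polynomials in C[U_1,...,U_n]: finitely supported maps from exponent vectors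
  (nat \<Rightarrow>0 nat, variable U_(i+1) indexed by i < n) to complex coefficients.\<close>

type_synonym mpoly = "(nat \<Rightarrow>\<^sub>0 nat) \<Rightarrow>\<^sub>0 complex"

definition in_vars :: "nat \<Rightarrow> mpoly \<Rightarrow> bool" where
  "in_vars n p \<longleftrightarrow> (\<forall>a\<in>Poly_Mapping.keys p. Poly_Mapping.keys a \<subseteq> {..<n})"

definition monomial :: "(nat \<Rightarrow>\<^sub>0 nat) \<Rightarrow> mpoly" where
  "monomial a = Poly_Mapping.single a 1"

definition LL :: "nat \<Rightarrow> mpoly \<Rightarrow> complex" where
  "LL n p = (\<Sum>a\<in>Poly_Mapping.keys p. Poly_Mapping.lookup p a * of_nat (\<Prod>i<n. fact (Poly_Mapping.lookup a i)))"

end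

theory Submission
  imports Defs "HOL-Computational_Algebra.Polynomial" "HOL-Computational_Algebra.Primes"
begin

(* Proof idea.  Put f = U^\<alpha> h, c = h(0) \<noteq> 0, and let S be the finite set of coefficients of h.

   1. Arithmetic of finitely generated rings: for every finite S \<subseteq> \<complex> and every nonzero d in
      the ring \<int>[S], some prime p is not invertible in \<int>[S, 1/d].  This is proved by induction
      on S, adjoining one generator a at a time; the cases "a transcendental over \<int>[S]" and
      "a algebraic over \<int>[S]" are handled with polynomials over \<int>[S] and pseudo-division.
   2. Frobenius: for a prime p, h^p = \<Sum>_g h_g^p U^(p g) + p z with z having coefficients in \<int>[S].
   3. For \<delta> = p \<alpha> and every monomial g \<noteq> 0 of h, the factorial ratio (\<delta> + p g)! / \<delta>! is
      divisible by p.  Hence L(f^p) = \<delta>! (c^p + p G) for some G \<in> \<int>[S].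
   4. Take p from step 1 with d = c.  If L(f^p) = 0 then p (-G) = c^p, so
      1/p = -G (1/c)^p lies in \<int>[S, 1/c], a contradiction.  Thus m = p works. *)

section \<open>The subring of the complex numbers generated by a set\<close>

inductive_set zring :: "complex set \<Rightarrow> complex set" for S where
  zring_of_int: "of_int k \<in> zring S"
| zring_gen: "x \<in> S \<Longrightarrow> x \<in> zring S"
| zring_add: "x \<in> zring S \<Longrightarrow> y \<in> zring S \<Longrightarrow> x + y \<in> zring S"
| zring_mult: "x \<in> zring S \<Longrightarrow> y \<in> zring S \<Longrightarrow> x * y \<in> zring S"

lemma zring_0: "0 \<in> zring S"
  using zring_of_int[of 0] by simp

lemma zring_1: "1 \<in> zring S"
  using zring_of_int[of 1] by simp

lemma zring_of_nat: "of_nat k \<in> zring S"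
  using zring_of_int[of "int k"] by simp

lemma zring_uminus: "x \<in> zring S \<Longrightarrow> - x \<in> zring S"
  using zring_mult[OF zring_of_int[of "-1"]] by simp

lemma zring_diff: "x \<in> zring S \<Longrightarrow> y \<in> zring S \<Longrightarrow> x - y \<in> zring S"
  using zring_add[OF _ zring_uminus, of x S y] by simp

lemma zring_power: "x \<in> zring S \<Longrightarrow> x ^ n \<in> zring S"
  by (induction n) (auto intro: zring_1 zring_mult)

lemma zring_sum: "(\<And>i. i \<in> A \<Longrightarrow> f i \<in> zring S) \<Longrightarrow> sum f A \<in> zring S"
  by (induction A rule: infinite_finite_induct) (auto intro: zring_0 zring_add)

lemma zring_mono:
  assumes "S \<subseteq> T" shows "zring S \<subseteq> zring T"
proof
  fix x assume "x \<in> zring S"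
  then show "x \<in> zring T"
  proof induction
    case (zring_gen x)
    then show ?case using assms by (simp add: subset_iff zring.zring_gen)
  qed (simp_all add: zring.zring_of_int zring.zring_add zring.zring_mult)
qed

lemma zring_empty: "x \<in> zring {} \<Longrightarrow> x \<in> \<int>"
  by (induction rule: zring.induct) (simp_all add: Ints_add Ints_mult)

lemma zring_localization:
  assumes "x \<in> zring (insert (1/d) T)" and "d \<in> zring T" and "d \<noteq> 0"
  shows "\<exists>y j. y \<in> zring T \<and> d ^ j * x = y"
  using assms(1)
proof induction
  case (zring_of_int k)
  show ?case by (intro exI[of _ "of_int k"] exI[of _ 0]) (auto intro: zring.zring_of_int)
next
  case (zring_gen x)
  then show ?case
  proof
    assume "x = 1/d"
    then have "d ^ 1 * x = 1" using assms(3) by simp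
    then show ?thesis using zring_1 by blast
  next
    assume "x \<in> T"
    then have "d ^ 0 * x = x" by simp
    then show ?thesis using \<open>x \<in> T\<close> zring.zring_gen by blast
  qed
next
  case (zring_add x y)
  then obtain u i v j where uv: "u \<in> zring T" "d ^ i * x = u" "v \<in> zring T" "d ^ j * y = v"
    by blast
  have "d ^ (i + j) * (x + y) = d ^ j * (d ^ i * x) + d ^ i * (d ^ j * y)"
    by (simp add: power_add algebra_simps)
  then have "d ^ (i + j) * (x + y) = d ^ j * u + d ^ i * v"
    by (simp only: uv(2,4))
  moreover have "d ^ j * u + d ^ i * v \<in> zring T"
    using uv assms(2) by (intro zring.zring_add zring.zring_mult zring_power)
  ultimately show ?case by blast
next
  case (zring_mult x y)
  then obtain u i v j where uv: "u \<in> zring T" "d ^ i * x = u" "v \<in> zring T" "d ^ j * y = v"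
    by blast
  have "d ^ (i + j) * (x * y) = (d ^ i * x) * (d ^ j * y)"
    by (simp add: power_add algebra_simps)
  then have "d ^ (i + j) * (x * y) = u * v"
    by (simp only: uv(2,4))
  then show ?case using uv by (blast intro: zring.zring_mult)
qed

lemma zring_inverse_of_divisor:
  assumes "x * r = e ^ k" and "r \<in> zring S" and "e \<noteq> 0"
  shows "1 / x \<in> zring (insert (1/e) S)"
proof -
  have "e ^ k \<noteq> 0" using assms(3) by simp
  then have "x \<noteq> 0" "r \<noteq> 0" using assms(1) by auto
  then have "1 / x = r / (x * r)" by simp
  also have "\<dots> = r * (1 / e) ^ k" unfolding assms(1) power_one_over by simp
  finally have inverse: "1 / x = r * (1 / e) ^ k" .
  have "r \<in> zring (insert (1/e) S)"
    using assms(2) zring_mono[of S "insert (1/e) S"] by blast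
  moreover have "(1 / e) ^ k \<in> zring (insert (1/e) S)"
    by (intro zring_power zring.zring_gen) simp
  ultimately show ?thesis unfolding inverse by (rule zring.zring_mult)
qed

section \<open>Polynomials with coefficients in a subring\<close>

definition poly_over :: "complex set \<Rightarrow> complex poly \<Rightarrow> bool" where
  "poly_over R P \<longleftrightarrow> (\<forall>i. coeff P i \<in> R)"

lemma poly_over_add: "poly_over (zring S) P \<Longrightarrow> poly_over (zring S) Q \<Longrightarrow> poly_over (zring S) (P + Q)"
  unfolding poly_over_def by (simp add: zring_add)

lemma poly_over_uminus: "poly_over (zring S) P \<Longrightarrow> poly_over (zring S) (- P)"
  unfolding poly_over_def by (simp add: zring_uminus)

lemma poly_over_diff: "poly_over (zring S) P \<Longrightarrow> poly_over (zring S) Q \<Longrightarrow> poly_over (zring S) (P - Q)"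
  unfolding poly_over_def by (simp add: zring_diff)

lemma poly_over_mult: "poly_over (zring S) P \<Longrightarrow> poly_over (zring S) Q \<Longrightarrow> poly_over (zring S) (P * Q)"
  unfolding poly_over_def coeff_mult by (auto intro!: zring_sum zring_mult)

lemma poly_over_const: "c \<in> zring S \<Longrightarrow> poly_over (zring S) [:c:]"
  by (auto simp: poly_over_def coeff_pCons split: nat.splits intro: zring_0)

lemma poly_over_zero: "poly_over (zring S) 0"
  by (simp add: poly_over_def zring_0)

lemma poly_over_one: "poly_over (zring S) 1"
  using poly_over_const[OF zring_1, of S] by (simp add: one_pCons)

lemma poly_over_X: "poly_over (zring S) [:0, 1:]"
  by (auto simp: poly_over_def coeff_pCons split: nat.splits intro: zring_0 zring_1)

lemma poly_over_smult: "c \<in> zring S \<Longrightarrow> poly_over (zring S) P \<Longrightarrow> poly_over (zring S) (smult c P)"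
  unfolding poly_over_def by (simp add: zring_mult)

lemma poly_over_power: "poly_over (zring S) P \<Longrightarrow> poly_over (zring S) (P ^ n)"
  by (induction n) (auto intro: poly_over_mult poly_over_one)

lemma poly_over_monom: "c \<in> zring S \<Longrightarrow> poly_over (zring S) (monom c n)"
  by (auto simp: poly_over_def coeff_monom intro: zring_0)

lemma zring_insert_poly:
  assumes "x \<in> zring (insert a S)"
  shows "\<exists>P. poly_over (zring S) P \<and> x = poly P a"
  using assms
proof induction
  case (zring_of_int k)
  show ?case by (intro exI[of _ "[:of_int k:]"]) (auto intro: poly_over_const zring.zring_of_int)
next
  case (zring_gen x)
  then show ?case
  proof
    assume "x = a"
    then show ?thesis using poly_over_X by (intro exI[of _ "[:0, 1:]"]) simp
  next
    assume "x \<in> S"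
    then show ?thesis by (intro exI[of _ "[:x:]"]) (simp add: poly_over_const zring.zring_gen)
  qed
next
  case (zring_add x y)
  then obtain P Q where "poly_over (zring S) P" "x = poly P a" "poly_over (zring S) Q" "y = poly Q a"
    by blast
  then show ?case by (intro exI[of _ "P + Q"]) (simp add: poly_over_add)
next
  case (zring_mult x y)
  then obtain P Q where "poly_over (zring S) P" "x = poly P a" "poly_over (zring S) Q" "y = poly Q a"
    by blast
  then show ?case by (intro exI[of _ "P * Q"]) (simp add: poly_over_mult)
qed

text \<open>One step of pseudo-division lowers the degree: the leading terms cancel.\<close>

lemma pseudo_division_step_degree:
  fixes A B :: "complex poly"
  assumes "B \<noteq> 0" and "A \<noteq> 0" and "degree B \<le> degree A"
    and "A' = smult (lead_coeff B) A - monom (lead_coeff A) (degree A - degree B) * B"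
  shows "A' = 0 \<or> degree A' < degree A"
proof -
  have "degree (monom (lead_coeff A) (degree A - degree B) * B) \<le> (degree A - degree B) + degree B"
    using degree_mult_le[of "monom (lead_coeff A) (degree A - degree B)" B]
      degree_monom_le[of "lead_coeff A" "degree A - degree B"] by linarith
  then have "degree A' \<le> degree A"
    unfolding assms(4) using assms(3) by (intro degree_diff_le degree_smult_le) linarith
  moreover have "coeff A' (degree A) = 0"
    unfolding assms(4) using assms(3) by (simp add: coeff_monom_mult)
  ultimately show ?thesis
    by (metis le_neq_implies_less leading_coeff_0_iff)
qed

lemma pseudo_division_over:
  assumes "poly_over (zring S) A" and "poly_over (zring S) B" and "B \<noteq> 0"
  shows "\<exists>j q r. poly_over (zring S) q \<and> poly_over (zring S) r \<and>
     smult (lead_coeff B ^ j) A = q * B + r \<and> (r = 0 \<or> degree r < degree B)"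
  using assms(1)
proof (induction "degree A" arbitrary: A rule: less_induct)
  case less
  have lcB: "lead_coeff B \<in> zring S" using assms(2) by (simp add: poly_over_def)
  show ?case
  proof (cases "A = 0 \<or> degree A < degree B")
    case True
    then show ?thesis using less.prems poly_over_zero[of S]
      by (intro exI[of _ 0] exI[of _ 0] exI[of _ A]) auto
  next
    case False
    define M where "M = monom (lead_coeff A) (degree A - degree B)"
    define A' where "A' = smult (lead_coeff B) A - M * B"
    have M: "poly_over (zring S) M"
      unfolding M_def using less.prems by (intro poly_over_monom) (simp add: poly_over_def)
    have A': "poly_over (zring S) A'"
      unfolding A'_def by (intro poly_over_diff poly_over_smult poly_over_mult lcB less.prems M assms(2))
    have "A \<noteq> 0" "degree B \<le> degree A" using False by auto
    then have "A' = 0 \<or> degree A' < degree A"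
      using pseudo_division_step_degree[OF assms(3)] unfolding A'_def M_def by blast
    then show ?thesis
    proof
      assume "A' = 0"
      then have "smult (lead_coeff B ^ 1) A = M * B + 0" by (simp add: A'_def)
      then show ?thesis using M poly_over_zero[of S]
        by (intro exI[of _ 1] exI[of _ M] exI[of _ 0]) simp
    next
      assume "degree A' < degree A"
      from less.hyps[OF this A'] obtain j q r where qr: "poly_over (zring S) q" "poly_over (zring S) r"
        "smult (lead_coeff B ^ j) A' = q * B + r" "r = 0 \<or> degree r < degree B" by blast
      have "smult (lead_coeff B ^ Suc j) A = smult (lead_coeff B ^ j) (A' + M * B)"
        by (simp add: A'_def mult.commute)
      also have "\<dots> = (q + smult (lead_coeff B ^ j) M) * B + r"
        using qr(3) by (simp add: smult_add_right algebra_simps)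
      moreover have "poly_over (zring S) (q + smult (lead_coeff B ^ j) M)"
        using qr(1) M lcB by (intro poly_over_add poly_over_smult zring_power)
      ultimately show ?thesis using qr(2,4)
        by (intro exI[of _ "Suc j"] exI[of _ "q + smult (lead_coeff B ^ j) M"] exI[of _ r]) simp
    qed
  qed
qed

lemma minimal_annihilator:
  assumes "\<exists>Q. poly_over R Q \<and> Q \<noteq> 0 \<and> poly Q a = 0"
  obtains Q where "poly_over R Q" "Q \<noteq> 0" "poly Q a = 0"
    "\<And>P. poly_over R P \<Longrightarrow> poly P a = 0 \<Longrightarrow> degree P < degree Q \<Longrightarrow> P = 0"
proof -
  define k where "k = (LEAST k. \<exists>Q. poly_over R Q \<and> Q \<noteq> 0 \<and> poly Q a = 0 \<and> degree Q = k)"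
  have "\<exists>k Q. poly_over R Q \<and> Q \<noteq> 0 \<and> poly Q a = 0 \<and> degree Q = k"
    using assms by blast
  then have "\<exists>Q. poly_over R Q \<and> Q \<noteq> 0 \<and> poly Q a = 0 \<and> degree Q = k"
    unfolding k_def by (rule LeastI_ex)
  then obtain Q where Q: "poly_over R Q" "Q \<noteq> 0" "poly Q a = 0" "degree Q = k" by blast
  show ?thesis
  proof (rule that[OF Q(1-3)])
    fix P assume P: "poly_over R P" "poly P a = 0" "degree P < degree Q"
    show "P = 0"
    proof (rule ccontr)
      assume "P \<noteq> 0"
      then have "k \<le> degree P" unfolding k_def using P by (intro Least_le) blast
      then show False using P(3) Q(4) by simp
    qed
  qed
qed

lemma algebraic_value_multiple_low_degree:
  assumes Q: "poly_over (zring S) Q" "Q \<noteq> 0" "poly Q a = 0"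
    and minQ: "\<And>P. poly_over (zring S) P \<Longrightarrow> poly P a = 0 \<Longrightarrow> degree P < degree Q \<Longrightarrow> P = 0"
  shows "poly_over (zring S) D \<Longrightarrow> poly D a \<noteq> 0 \<Longrightarrow> degree D < degree Q \<Longrightarrow>
    \<exists>U E. poly_over (zring S) U \<and> E \<in> zring S \<and> E \<noteq> 0 \<and> poly D a * poly U a = E"
proof (induction "degree D" arbitrary: D rule: less_induct)
  case less
  show ?case
  proof (cases "degree D = 0")
    case True
    have "poly [:coeff D 0:] a = coeff D 0" by simp
    then have "poly D a = coeff D 0" by (simp only: degree_0_id[OF True])
    moreover have "coeff D 0 \<in> zring S" using less.prems(1) by (simp add: poly_over_def)
    ultimately show ?thesis using less.prems(2) poly_over_one[of S] by force
  next
    case False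
    have "D \<noteq> 0" using less.prems(2) by auto
    then obtain j q r where qr: "poly_over (zring S) q" "poly_over (zring S) r"
      "smult (lead_coeff D ^ j) Q = q * D + r" "r = 0 \<or> degree r < degree D"
      using pseudo_division_over[OF Q(1) less.prems(1)] by blast
    have at_a: "poly q a * poly D a = - poly r a"
      using arg_cong[OF qr(3), of "\<lambda>P. poly P a"] Q(3) by (simp add: eq_neg_iff_add_eq_0)
    have "r \<noteq> 0"
    proof
      assume "r = 0"
      then have "poly q a = 0" using at_a less.prems(2) by simp
      have eq: "smult (lead_coeff D ^ j) Q = q * D" using qr(3) \<open>r = 0\<close> by simp
      then have "q \<noteq> 0" using Q(2) \<open>D \<noteq> 0\<close> by auto
      have "lead_coeff D ^ j \<noteq> 0" using \<open>D \<noteq> 0\<close> by simp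
      then have "degree Q = degree (q * D)" using eq degree_smult_eq by metis
      also have "\<dots> = degree q + degree D" using \<open>q \<noteq> 0\<close> \<open>D \<noteq> 0\<close> by (rule degree_mult_eq)
      finally have "degree Q = degree q + degree D" .
      then have "q = 0" using minQ[OF qr(1) \<open>poly q a = 0\<close>] False by simp
      then show False using \<open>q \<noteq> 0\<close> by simp
    qed
    then have deg_r: "degree r < degree D" using qr(4) by simp
    have "poly r a \<noteq> 0" using minQ[OF qr(2)] deg_r less.prems(3) \<open>r \<noteq> 0\<close> by auto
    then obtain U E where UE: "poly_over (zring S) U" "E \<in> zring S" "E \<noteq> 0" "poly r a * poly U a = E"
      using less.hyps[OF deg_r qr(2)] deg_r less.prems(3) by force
    have "poly D a * poly (- (q * U)) a = - (poly q a * poly D a) * poly U a"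
      by (simp add: algebra_simps)
    also have "\<dots> = E" using at_a UE(4) by simp
    finally have "poly D a * poly (- (q * U)) a = E" .
    then show ?thesis using UE qr(1) by (blast intro: poly_over_uminus poly_over_mult)
  qed
qed

text \<open>The general case: reduce \<open>D\<close> modulo \<open>Q\<close> first.\<close>

lemma algebraic_value_multiple:
  assumes Q: "poly_over (zring S) Q" "Q \<noteq> 0" "poly Q a = 0"
    and minQ: "\<And>P. poly_over (zring S) P \<Longrightarrow> poly P a = 0 \<Longrightarrow> degree P < degree Q \<Longrightarrow> P = 0"
    and D: "poly_over (zring S) D" "poly D a \<noteq> 0"
  shows "\<exists>U E. poly_over (zring S) U \<and> E \<in> zring S \<and> E \<noteq> 0 \<and> poly D a * poly U a = E"
proof -
  obtain j q r where qr: "poly_over (zring S) q" "poly_over (zring S) r"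
      "smult (lead_coeff Q ^ j) D = q * Q + r" "r = 0 \<or> degree r < degree Q"
    using pseudo_division_over[OF D(1) Q(1,2)] by blast
  have at_a: "lead_coeff Q ^ j * poly D a = poly r a"
    using arg_cong[OF qr(3), of "\<lambda>P. poly P a"] Q(3) by simp
  then have "poly r a \<noteq> 0" using Q(2) D(2) by auto
  then have "degree r < degree Q" using qr(4) by auto
  then obtain U E where UE: "poly_over (zring S) U" "E \<in> zring S" "E \<noteq> 0" "poly r a * poly U a = E"
    using algebraic_value_multiple_low_degree[OF Q minQ qr(2) \<open>poly r a \<noteq> 0\<close>] by blast
  have "poly D a * poly (smult (lead_coeff Q ^ j) U) a = (lead_coeff Q ^ j * poly D a) * poly U a"
    by (simp add: algebra_simps)
  also have "\<dots> = E" using UE(4) at_a by simp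
  finally have "poly D a * poly (smult (lead_coeff Q ^ j) U) a = E" .
  moreover have "lead_coeff Q \<in> zring S" using Q(1) by (simp add: poly_over_def)
  ultimately show ?thesis using UE by (blast intro: poly_over_smult zring_power)
qed

text \<open>Reduce \<open>W\<close>
  modulo \<open>Q\<close>; the remainder identity has degree below \<open>deg Q\<close>, so it holds coefficientwise.\<close>

lemma divisibility_descends:
  assumes Q: "poly_over (zring S) Q" "Q \<noteq> 0" "poly Q a = 0"
    and minQ: "\<And>P. poly_over (zring S) P \<Longrightarrow> poly P a = 0 \<Longrightarrow> degree P < degree Q \<Longrightarrow> P = 0"
    and W: "poly_over (zring S) W" and "b = x * poly W a" and "b \<in> zring S" and "x \<in> zring S"
  shows "\<exists>i r. r \<in> zring S \<and> x * r = lead_coeff Q ^ i * b"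
proof -
  have deg_Q: "degree Q > 0"
  proof (rule ccontr)
    assume "\<not> degree Q > 0"
    then have "[:coeff Q 0:] = Q" by (intro degree_0_id) simp
    moreover have "poly [:coeff Q 0:] a = coeff Q 0" by simp
    ultimately show False using Q(2,3) by auto
  qed
  obtain i q r where qr: "poly_over (zring S) q" "poly_over (zring S) r"
    "smult (lead_coeff Q ^ i) W = q * Q + r" "r = 0 \<or> degree r < degree Q"
    using pseudo_division_over[OF W Q(1,2)] by blast
  have lc: "lead_coeff Q \<in> zring S" using Q(1) by (simp add: poly_over_def)
  define c where "c = lead_coeff Q ^ i * b"
  have "c = x * poly r a"
    using arg_cong[OF qr(3), of "\<lambda>P. poly P a"] Q(3) assms(6) by (simp add: c_def algebra_simps)
  then have "poly (smult x r - [:c:]) a = 0" by simp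
  moreover have "poly_over (zring S) (smult x r - [:c:])"
    unfolding c_def using qr(2) lc assms(7,8)
    by (intro poly_over_diff poly_over_smult poly_over_const zring_mult zring_power)
  moreover have "degree (smult x r - [:c:]) < degree Q"
  proof -
    have "degree (smult x r) \<le> degree Q - 1"
      using qr(4) deg_Q degree_smult_le[of x r] by auto
    then have "degree (smult x r - [:c:]) \<le> degree Q - 1"
      by (rule degree_diff_le) simp
    then show ?thesis using deg_Q by linarith
  qed
  ultimately have "smult x r - [:c:] = 0" using minQ by blast
  then have "coeff (smult x r - [:c:]) 0 = 0" by simp
  then have "x * coeff r 0 = c" by simp
  moreover have "coeff r 0 \<in> zring S" using qr(2) by (simp add: poly_over_def)
  ultimately show ?thesis unfolding c_def by blast
qed

section \<open>Finitely generated rings do not invert all primes\<close>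

definition prime_survives :: "complex set \<Rightarrow> bool" where
  "prime_survives S \<longleftrightarrow>
     (\<forall>d \<in> zring S. d \<noteq> 0 \<longrightarrow> (\<exists>p. prime p \<and> 1 / of_nat p \<notin> zring (insert (1/d) S)))"

lemma prime_survives_empty: "prime_survives {}"
  unfolding prime_survives_def
proof (intro ballI impI)
  fix d :: complex assume d: "d \<in> zring {}" "d \<noteq> 0"
  obtain z where z: "d = of_int z" using zring_empty[OF d(1)] Ints_cases by blast
  then have "z \<noteq> 0" using d(2) by auto
  obtain p where p: "prime p" "nat \<bar>z\<bar> < p" using bigger_prime by blast
  have "1 / of_nat p \<notin> zring (insert (1/d) {})"
  proof
    assume inv: "1 / of_nat p \<in> zring (insert (1/d) {})"
    obtain y j where y: "y \<in> zring {}" "d ^ j * (1 / of_nat p) = y"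
      using zring_localization[OF inv d] by blast
    obtain w where w: "y = of_int w" using zring_empty[OF y(1)] Ints_cases by blast
    have "(of_nat p :: complex) \<noteq> 0" using prime_gt_0_nat[OF p(1)] by simp
    then have "d ^ j = of_nat p * y" unfolding y(2)[symmetric] by simp
    then have "(of_int (z ^ j) :: complex) = of_int (int p * w)" using z(1) w by simp
    then have "z ^ j = int p * w" by (simp only: of_int_eq_iff)
    then have "int p dvd z ^ j" by simp
    moreover have "prime (int p)" using p(1) by simp
    ultimately have "int p dvd z" using prime_dvd_power by blast
    then have "\<bar>int p\<bar> \<le> \<bar>z\<bar>" using \<open>z \<noteq> 0\<close> by (intro dvd_imp_le_int)
    then show False using p(2) by simp
  qed
  then show "\<exists>p. prime p \<and> 1 / of_nat p \<notin> zring (insert (1/d) {})" using p(1) by blast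
qed

lemma inverse_in_localization:
  assumes "1 / x \<in> zring (insert (1/d) (insert a S))" and "d \<in> zring (insert a S)" and "d \<noteq> 0"
    and "x \<noteq> 0"
  shows "\<exists>P j. poly_over (zring S) P \<and> d ^ j = x * poly P a"
proof -
  obtain y j where "y \<in> zring (insert a S)" "d ^ j * (1 / x) = y"
    using zring_localization[OF assms(1-3)] by blast
  moreover obtain P where "poly_over (zring S) P" "y = poly P a"
    using zring_insert_poly[OF \<open>y \<in> zring (insert a S)\<close>] by blast
  ultimately show ?thesis using assms(4) by (auto simp: field_simps)
qed

text \<open>Adjoining a transcendental element: compare leading coefficients in \<open>D^j = p P\<close>.\<close>

lemma prime_survives_transcendental:
  assumes IH: "prime_survives S"
    and transc: "\<And>P. poly_over (zring S) P \<Longrightarrow> poly P a = 0 \<Longrightarrow> P = 0"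
  shows "prime_survives (insert a S)"
  unfolding prime_survives_def
proof (intro ballI impI)
  fix d assume d: "d \<in> zring (insert a S)" "d \<noteq> 0"
  obtain D where D: "poly_over (zring S) D" "d = poly D a" using zring_insert_poly[OF d(1)] by blast
  define l where "l = lead_coeff D"
  have l: "l \<in> zring S" "l \<noteq> 0" using D d(2) by (auto simp: l_def poly_over_def)
  obtain p where p: "prime p" "1 / of_nat p \<notin> zring (insert (1/l) S)"
    using IH l unfolding prime_survives_def by blast
  have "1 / of_nat p \<notin> zring (insert (1/d) (insert a S))"
  proof
    assume "1 / of_nat p \<in> zring (insert (1/d) (insert a S))"
    moreover have "(of_nat p :: complex) \<noteq> 0" using prime_gt_0_nat[OF p(1)] by simp
    ultimately obtain P j where P: "poly_over (zring S) P" "d ^ j = of_nat p * poly P a"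
      using inverse_in_localization d by blast
    have "poly_over (zring S) (D ^ j - smult (of_nat p) P)"
      by (intro poly_over_diff poly_over_power poly_over_smult zring_of_nat D(1) P(1))
    moreover have "poly (D ^ j - smult (of_nat p) P) a = 0" using D(2) P(2) by simp
    ultimately have "D ^ j - smult (of_nat p) P = 0" by (rule transc)
    then have "D ^ j = smult (of_nat p) P" by simp
    then have "coeff (D ^ j) (degree (D ^ j)) = of_nat p * coeff P (degree (D ^ j))"
      by (metis coeff_smult)
    then have "of_nat p * coeff P (degree (D ^ j)) = l ^ j"
      by (simp only: l_def lead_coeff_power)
    moreover have "coeff P (degree (D ^ j)) \<in> zring S" using P(1) by (simp add: poly_over_def)
    ultimately show False
      using p(2) zring_inverse_of_divisor l(2) by blast
  qed
  then show "\<exists>p. prime p \<and> 1 / of_nat p \<notin> zring (insert (1/d) (insert a S))" using p(1) by blast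
qed

text \<open>Adjoining an algebraic element with minimal annihilator \<open>Q\<close> (leading coefficient \<open>e\<close>):
  \<open>1/d = U(a)/E\<close> with \<open>E \<in> \<int>[S]\<close>, so \<open>1/p \<in> \<int>[S, a, 1/d]\<close> makes \<open>E^j\<close> divisible by \<open>p\<close> in
  \<int>[S, a]; by descent \<open>1/p\<close> would already lie in \<int>[S, 1/(e E)].\<close>

lemma prime_survives_algebraic:
  assumes IH: "prime_survives S"
    and alg: "\<exists>Q. poly_over (zring S) Q \<and> Q \<noteq> 0 \<and> poly Q a = 0"
  shows "prime_survives (insert a S)"
  unfolding prime_survives_def
proof (intro ballI impI)
  fix d assume d: "d \<in> zring (insert a S)" "d \<noteq> 0"
  obtain Q where Q: "poly_over (zring S) Q" "Q \<noteq> 0" "poly Q a = 0"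
    and minQ: "\<And>P. poly_over (zring S) P \<Longrightarrow> poly P a = 0 \<Longrightarrow> degree P < degree Q \<Longrightarrow> P = 0"
    using minimal_annihilator[OF alg] by blast
  obtain D where D: "poly_over (zring S) D" "d = poly D a" using zring_insert_poly[OF d(1)] by blast
  obtain U E where UE: "poly_over (zring S) U" "E \<in> zring S" "E \<noteq> 0" "d * poly U a = E"
    using algebraic_value_multiple[OF Q minQ D(1)] D(2) d(2) by blast
  define e where "e = lead_coeff Q"
  have e: "e \<in> zring S" "e \<noteq> 0" using Q(1,2) by (simp_all add: e_def poly_over_def)
  have eE: "e * E \<in> zring S" "e * E \<noteq> 0" using e UE(2,3) by (simp_all add: zring.zring_mult)
  obtain p where p: "prime p" "1 / of_nat p \<notin> zring (insert (1 / (e * E)) S)"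
    using IH eE unfolding prime_survives_def by blast
  have "1 / of_nat p \<notin> zring (insert (1/d) (insert a S))"
  proof
    assume "1 / of_nat p \<in> zring (insert (1/d) (insert a S))"
    moreover have "(of_nat p :: complex) \<noteq> 0" using prime_gt_0_nat[OF p(1)] by simp
    ultimately obtain P j where P: "poly_over (zring S) P" "d ^ j = of_nat p * poly P a"
      using inverse_in_localization d by blast
    define W where "W = P * U ^ j"
    have W: "poly_over (zring S) W" unfolding W_def by (intro poly_over_mult poly_over_power P(1) UE(1))
    have "E ^ j = d ^ j * poly U a ^ j" unfolding UE(4)[symmetric] by (rule power_mult_distrib)
    then have "E ^ j = of_nat p * poly W a" using P(2) by (simp add: W_def)
    then obtain i r where r: "r \<in> zring S" "of_nat p * r = e ^ i * E ^ j"
      using divisibility_descends[OF Q minQ W _ zring_power[OF UE(2)] zring_of_nat] unfolding e_def by blast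
    then have "of_nat p * (r * e ^ j * E ^ i) = (e * E) ^ (i + j)"
      by (simp add: power_add power_mult_distrib algebra_simps)
    moreover have "r * e ^ j * E ^ i \<in> zring S"
      using r(1) e UE(2) by (intro zring_mult zring_power)
    ultimately show False
      using p(2) zring_inverse_of_divisor eE(2) by blast
  qed
  then show "\<exists>p. prime p \<and> 1 / of_nat p \<notin> zring (insert (1/d) (insert a S))" using p(1) by blast
qed

theorem prime_survives_finite: "finite S \<Longrightarrow> prime_survives S"
proof (induction S rule: finite_induct)
  case empty
  show ?case by (rule prime_survives_empty)
next
  case (insert a S)
  show ?case
  proof (cases "\<exists>Q. poly_over (zring S) Q \<and> Q \<noteq> 0 \<and> poly Q a = 0")
    case True
    then show ?thesis using prime_survives_algebraic insert.IH by blast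
  next
    case False
    then show ?thesis using prime_survives_transcendental insert.IH by blast
  qed
qed

section \<open>The Frobenius congruence\<close>

definition ring_closed :: "('a::comm_ring_1 \<Rightarrow> bool) \<Rightarrow> bool" where
  "ring_closed P \<longleftrightarrow> P 0 \<and> P 1 \<and> (\<forall>a b. P a \<longrightarrow> P b \<longrightarrow> P (a + b)) \<and> (\<forall>a b. P a \<longrightarrow> P b \<longrightarrow> P (a * b))"

lemma ring_closed_of_nat: "ring_closed P \<Longrightarrow> P (of_nat m)"
  unfolding ring_closed_def by (induction m) simp_all

lemma ring_closed_power: "ring_closed P \<Longrightarrow> P a \<Longrightarrow> P (a ^ m)"
  unfolding ring_closed_def by (induction m) simp_all

lemma ring_closed_sum: "ring_closed P \<Longrightarrow> (\<And>k. k \<in> A \<Longrightarrow> P (g k)) \<Longrightarrow> P (sum g A)"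
  unfolding ring_closed_def by (induction A rule: infinite_finite_induct) simp_all

text \<open>For a prime \<open>p\<close>, \<open>(x + y)^p = x^p + y^p + p z\<close>, where \<open>z\<close> lies in every ring-closed set
  containing \<open>x\<close> and \<open>y\<close>: the middle binomial coefficients are divisible by \<open>p\<close>.\<close>

lemma frobenius_binomial:
  fixes x y :: "'a::comm_ring_1"
  assumes P: "ring_closed P" and "P x" "P y" and p: "prime p"
  shows "\<exists>z. P z \<and> (x + y) ^ p = x ^ p + y ^ p + of_nat p * z"
proof -
  have p0: "p > 0" using p prime_gt_0_nat by blast
  define z where "z = (\<Sum>k\<in>{1..<p}. of_nat ((p choose k) div p) * x ^ k * y ^ (p - k))"
  have Pmult: "P (a * b)" if "P a" "P b" for a b using P that by (simp add: ring_closed_def)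
  have "P z" unfolding z_def
    using Pmult[OF Pmult[OF ring_closed_of_nat[OF P] ring_closed_power[OF P \<open>P x\<close>]]
        ring_closed_power[OF P \<open>P y\<close>]]
    by (intro ring_closed_sum[OF P])
  have "(x + y) ^ p = (\<Sum>k\<le>p. of_nat (p choose k) * x ^ k * y ^ (p - k))"
    by (rule binomial_ring)
  also have "{..p} = insert 0 (insert p {1..<p})" using p0 by auto
  also have "(\<Sum>k\<in>insert 0 (insert p {1..<p}). of_nat (p choose k) * x ^ k * y ^ (p - k))
      = y ^ p + (x ^ p + (\<Sum>k\<in>{1..<p}. of_nat (p choose k) * x ^ k * y ^ (p - k)))"
    using p0 by simp
  also have "(\<Sum>k\<in>{1..<p}. of_nat (p choose k) * x ^ k * y ^ (p - k)) = of_nat p * z"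
    unfolding z_def sum_distrib_left
  proof (rule sum.cong[OF refl])
    fix k assume k: "k \<in> {1..<p}"
    then have "p dvd (p choose k)" using p by (intro dvd_choose_prime) auto
    then have "p choose k = p * ((p choose k) div p)" by simp
    then have "(of_nat (p choose k) :: 'a) = of_nat p * of_nat ((p choose k) div p)"
      by (metis of_nat_mult)
    then show "of_nat (p choose k) * x ^ k * y ^ (p - k) =
        of_nat p * (of_nat ((p choose k) div p) * x ^ k * y ^ (p - k))"
      by (simp add: mult.assoc)
  qed
  finally show ?thesis using \<open>P z\<close> by (intro exI[of _ z]) (simp add: add_ac)
qed

lemma frobenius_sum:
  fixes t :: "'b \<Rightarrow> 'a::comm_ring_1"
  assumes P: "ring_closed P" and p: "prime p"
  shows "finite K \<Longrightarrow> (\<And>g. g \<in> K \<Longrightarrow> P (t g)) \<Longrightarrow>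
     \<exists>z. P z \<and> (\<Sum>g\<in>K. t g) ^ p = (\<Sum>g\<in>K. t g ^ p) + of_nat p * z"
proof (induction K rule: finite_induct)
  case empty
  have "p > 0" using p prime_gt_0_nat by blast
  then show ?case using P by (intro exI[of _ 0]) (simp add: ring_closed_def zero_power)
next
  case (insert g K)
  obtain z1 where z1: "P z1" "(\<Sum>g\<in>K. t g) ^ p = (\<Sum>g\<in>K. t g ^ p) + of_nat p * z1"
    using insert by blast
  have "P (sum t K)" using insert.prems by (intro ring_closed_sum[OF P]) auto
  then obtain z2 where z2: "P z2" "(t g + sum t K) ^ p = t g ^ p + sum t K ^ p + of_nat p * z2"
    using frobenius_binomial[OF P _ _ p, of "t g"] insert.prems by blast
  have "(\<Sum>g\<in>insert g K. t g) ^ p = (\<Sum>g\<in>insert g K. t g ^ p) + of_nat p * (z1 + z2)"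
    using insert.hyps z1(2) z2(2) by (simp add: algebra_simps)
  moreover have "P (z1 + z2)" using P z1(1) z2(1) by (simp add: ring_closed_def)
  ultimately show ?case by blast
qed

definition coeffs_in :: "complex set \<Rightarrow> mpoly \<Rightarrow> bool" where
  "coeffs_in R q \<longleftrightarrow> (\<forall>k. Poly_Mapping.lookup q k \<in> R)"

lemma poly_mapping_sum_terms:
  fixes q :: "'a \<Rightarrow>\<^sub>0 'b::comm_monoid_add"
  shows "q = (\<Sum>b\<in>Poly_Mapping.keys q. Poly_Mapping.single b (Poly_Mapping.lookup q b))"
proof (rule poly_mapping_eqI)
  fix k
  show "Poly_Mapping.lookup q k =
      Poly_Mapping.lookup (\<Sum>b\<in>Poly_Mapping.keys q. Poly_Mapping.single b (Poly_Mapping.lookup q b)) k"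
    by (cases "k \<in> Poly_Mapping.keys q") (simp_all add: lookup_sum lookup_single when_def in_keys_iff)
qed

lemma coeffs_in_add: "coeffs_in (zring S) q \<Longrightarrow> coeffs_in (zring S) r \<Longrightarrow> coeffs_in (zring S) (q + r)"
  unfolding coeffs_in_def by (simp add: lookup_add zring.zring_add)

lemma coeffs_in_single: "c \<in> zring S \<Longrightarrow> coeffs_in (zring S) (Poly_Mapping.single b c)"
  unfolding coeffs_in_def by (simp add: lookup_single when_def zring_0)

lemma coeffs_in_sum: "(\<And>i. i \<in> A \<Longrightarrow> coeffs_in (zring S) (g i)) \<Longrightarrow> coeffs_in (zring S) (sum g A)"
proof (induction A rule: infinite_finite_induct)
  case (insert x F)
  then show ?case by (simp add: coeffs_in_add)
qed (simp_all add: coeffs_in_def zring_0)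

lemma coeffs_in_mult:
  assumes "coeffs_in (zring S) q" "coeffs_in (zring S) r"
  shows "coeffs_in (zring S) (q * r)"
proof -
  have "q * r = (\<Sum>b\<in>Poly_Mapping.keys q. Poly_Mapping.single b (Poly_Mapping.lookup q b)) *
                (\<Sum>c\<in>Poly_Mapping.keys r. Poly_Mapping.single c (Poly_Mapping.lookup r c))"
    by (simp only: poly_mapping_sum_terms[symmetric])
  also have "\<dots> = (\<Sum>c\<in>Poly_Mapping.keys r. \<Sum>b\<in>Poly_Mapping.keys q.
      Poly_Mapping.single (b + c) (Poly_Mapping.lookup q b * Poly_Mapping.lookup r c))"
    by (simp add: sum_distrib_left sum_distrib_right mult_single)
  finally show ?thesis using assms unfolding coeffs_in_def[of _ q] coeffs_in_def[of _ r]
    by (auto intro!: coeffs_in_sum coeffs_in_single zring.zring_mult)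
qed

lemma ring_closed_coeffs_in: "ring_closed (coeffs_in (zring S))"
  unfolding ring_closed_def
  using coeffs_in_single[OF zring_0, of S 0] coeffs_in_single[OF zring_1, of S 0]
  by (simp add: coeffs_in_add coeffs_in_mult)

lemma single_power: "(Poly_Mapping.single g a :: mpoly) ^ m = Poly_Mapping.single (\<Sum>i<m. g) (a ^ m)"
proof (induction m)
  case (Suc m)
  have "(Poly_Mapping.single g a :: mpoly) ^ Suc m = Poly_Mapping.single g a * Poly_Mapping.single (\<Sum>i<m. g) (a ^ m)"
    using Suc by simp
  also have "\<dots> = Poly_Mapping.single (g + (\<Sum>i<m. g)) (a * a ^ m)" by (rule mult_single)
  also have "g + (\<Sum>i<m. g) = (\<Sum>i<Suc m. g)" by (simp only: sum.lessThan_Suc add.commute)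
  finally show ?case by simp
qed simp

lemma lookup_sum_const: "Poly_Mapping.lookup (\<Sum>i<(m::nat). (g :: 'a \<Rightarrow>\<^sub>0 nat)) k = m * Poly_Mapping.lookup g k"
  by (simp add: lookup_sum)

lemma mpoly_frobenius:
  assumes "prime p" and "coeffs_in (zring S) h"
  shows "\<exists>z. coeffs_in (zring S) z \<and>
    h ^ p = (\<Sum>g\<in>Poly_Mapping.keys h. Poly_Mapping.single (\<Sum>i<p. g) (Poly_Mapping.lookup h g ^ p))
      + of_nat p * z"
proof -
  define t where "t g = Poly_Mapping.single g (Poly_Mapping.lookup h g)" for g
  have terms: "coeffs_in (zring S) (t g)" for g
  proof -
    have "Poly_Mapping.lookup h g \<in> zring S" using assms(2) unfolding coeffs_in_def by blast
    then show ?thesis unfolding t_def by (rule coeffs_in_single)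
  qed
  have "\<exists>z. coeffs_in (zring S) z \<and>
      (\<Sum>g\<in>Poly_Mapping.keys h. t g) ^ p = (\<Sum>g\<in>Poly_Mapping.keys h. t g ^ p) + of_nat p * z"
    by (rule frobenius_sum[OF ring_closed_coeffs_in assms(1) finite_keys]) (rule terms)
  then obtain z where z: "coeffs_in (zring S) z"
      "(\<Sum>g\<in>Poly_Mapping.keys h. t g) ^ p = (\<Sum>g\<in>Poly_Mapping.keys h. t g ^ p) + of_nat p * z"
    by blast
  have "h = (\<Sum>g\<in>Poly_Mapping.keys h. t g)"
    unfolding t_def by (rule poly_mapping_sum_terms)
  then have "h ^ p = (\<Sum>g\<in>Poly_Mapping.keys h. t g) ^ p" by (rule arg_cong)
  also have "\<dots> = (\<Sum>g\<in>Poly_Mapping.keys h. t g ^ p) + of_nat p * z" by (rule z(2))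
  also have "(\<Sum>g\<in>Poly_Mapping.keys h. t g ^ p) =
      (\<Sum>g\<in>Poly_Mapping.keys h. Poly_Mapping.single (\<Sum>i<p. g) (Poly_Mapping.lookup h g ^ p))"
    unfolding t_def single_power ..
  finally show ?thesis using z(1) by blast
qed

definition weighted_sum :: "((nat \<Rightarrow>\<^sub>0 nat) \<Rightarrow> nat) \<Rightarrow> mpoly \<Rightarrow> complex" where
  "weighted_sum w q = (\<Sum>a\<in>Poly_Mapping.keys q. Poly_Mapping.lookup q a * of_nat (w a))"

lemma weighted_sum_superset:
  assumes "finite A" "Poly_Mapping.keys q \<subseteq> A"
  shows "weighted_sum w q = (\<Sum>a\<in>A. Poly_Mapping.lookup q a * of_nat (w a))"
  unfolding weighted_sum_def
  by (rule sum.mono_neutral_left[OF assms]) (simp add: in_keys_iff)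

lemma weighted_sum_add: "weighted_sum w (q + r) = weighted_sum w q + weighted_sum w r"
proof -
  let ?A = "Poly_Mapping.keys q \<union> Poly_Mapping.keys r"
  have "weighted_sum w (q + r) = (\<Sum>a\<in>?A. Poly_Mapping.lookup (q + r) a * of_nat (w a))"
    by (rule weighted_sum_superset) (simp_all add: keys_add)
  also have "\<dots> = (\<Sum>a\<in>?A. Poly_Mapping.lookup q a * of_nat (w a)) + (\<Sum>a\<in>?A. Poly_Mapping.lookup r a * of_nat (w a))"
    by (simp add: lookup_add algebra_simps sum.distrib)
  also have "\<dots> = weighted_sum w q + weighted_sum w r"
    by (simp add: weighted_sum_superset[of ?A])
  finally show ?thesis .
qed

lemma weighted_sum_sum: "weighted_sum w (sum g A) = (\<Sum>i\<in>A. weighted_sum w (g i))"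
proof (induction A rule: infinite_finite_induct)
  case (insert x F)
  then show ?case by (simp add: weighted_sum_add)
qed (simp_all add: weighted_sum_def)

lemma weighted_sum_single: "weighted_sum w (Poly_Mapping.single b c) = c * of_nat (w b)"
  by (simp add: weighted_sum_def)

lemma weighted_sum_of_nat_mult: "weighted_sum w (of_nat m * q) = of_nat m * weighted_sum w q"
proof (induction m)
  case (Suc m)
  have "(of_nat (Suc m) :: mpoly) * q = q + of_nat m * q" by (simp add: algebra_simps)
  then show ?case using Suc by (simp add: weighted_sum_add algebra_simps)
qed (simp add: weighted_sum_def)

lemma weighted_sum_in_zring: "coeffs_in (zring S) q \<Longrightarrow> weighted_sum w q \<in> zring S"
  unfolding weighted_sum_def coeffs_in_def by (intro zring_sum zring.zring_mult zring_of_nat) auto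

lemma weighted_sum_shift:
  "weighted_sum w (Poly_Mapping.single d 1 * X) =
     (\<Sum>b\<in>Poly_Mapping.keys X. Poly_Mapping.lookup X b * of_nat (w (d + b)))"
proof -
  have "Poly_Mapping.single d 1 * X =
      Poly_Mapping.single d 1 * (\<Sum>b\<in>Poly_Mapping.keys X. Poly_Mapping.single b (Poly_Mapping.lookup X b))"
    by (simp only: poly_mapping_sum_terms[symmetric])
  also have "\<dots> = (\<Sum>b\<in>Poly_Mapping.keys X. Poly_Mapping.single (d + b) (Poly_Mapping.lookup X b))"
    by (simp add: sum_distrib_left mult_single)
  finally show ?thesis by (simp add: weighted_sum_sum weighted_sum_single)
qed

section \<open>Factorial weights\<close>

definition fact_weight :: "nat \<Rightarrow> (nat \<Rightarrow>\<^sub>0 nat) \<Rightarrow> nat" where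
  "fact_weight n a = (\<Prod>i<n. fact (Poly_Mapping.lookup a i))"

lemma LL_eq_weighted_sum: "LL n = weighted_sum (fact_weight n)"
  by (simp add: fun_eq_iff LL_def weighted_sum_def fact_weight_def)

definition fact_ratio :: "nat \<Rightarrow> (nat \<Rightarrow>\<^sub>0 nat) \<Rightarrow> (nat \<Rightarrow>\<^sub>0 nat) \<Rightarrow> nat" where
  "fact_ratio n d b =
     (\<Prod>i<n. fact (Poly_Mapping.lookup d i + Poly_Mapping.lookup b i) div fact (Poly_Mapping.lookup d i))"

lemma fact_weight_add: "fact_weight n (d + b) = fact_weight n d * fact_ratio n d b"
proof -
  have "fact_weight n (d + b) =
      (\<Prod>i<n. fact (Poly_Mapping.lookup d i) *
        (fact (Poly_Mapping.lookup d i + Poly_Mapping.lookup b i) div fact (Poly_Mapping.lookup d i)))"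
    unfolding fact_weight_def by (intro prod.cong) (simp_all add: lookup_add fact_dvd)
  then show ?thesis by (simp add: fact_weight_def fact_ratio_def prod.distrib)
qed

lemma fact_ratio_zero: "fact_ratio n d 0 = 1"
  by (simp add: fact_ratio_def)

lemma LL_monomial_times:
  "LL n (Poly_Mapping.single d 1 * X) = of_nat (fact_weight n d) * weighted_sum (fact_ratio n d) X"
  unfolding LL_eq_weighted_sum weighted_sum_shift fact_weight_add
  by (simp add: weighted_sum_def sum_distrib_left algebra_simps)

text \<open>The interval \<open>(p a, p a + p b]\<close> with \<open>b \<ge> 1\<close> contains the multiple \<open>p a + p\<close> of \<open>p\<close>.\<close>

lemma prime_dvd_fact_quotient:
  assumes "(p::nat) > 0" "b \<ge> 1"
  shows "p dvd fact (p * a + p * b) div fact (p * a)"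
proof -
  let ?x = "p * a"
  have "fact ?x * p dvd (fact (?x + p - 1) :: nat) * (?x + p)"
    by (intro mult_dvd_mono fact_dvd) (use assms(1) in simp_all)
  also have "(fact (?x + p - 1) :: nat) * (?x + p) = fact (?x + p)"
    using fact_reduce[of "?x + p", where 'a = nat] assms(1) by (simp add: mult.commute)
  also have "(fact (?x + p) :: nat) dvd fact (?x + p * b)"
    by (rule fact_dvd) (use assms(2) in simp)
  finally obtain k where k: "fact (?x + p * b) = fact ?x * p * (k :: nat)" by (rule dvdE)
  then show ?thesis by (simp add: mult.assoc)
qed

text \<open>Hence \<open>p\<close> divides \<open>(p \<alpha> + p g)!/(p \<alpha>)!\<close> for every nonzero monomial \<open>g\<close> in the first \<open>n\<close>
  variables: some variable \<open>i < n\<close> occurs in \<open>g\<close>, and its factor is divisible by \<open>p\<close>.\<close>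

lemma prime_dvd_fact_ratio:
  assumes "(p::nat) > 0" and "g \<noteq> 0" and "Poly_Mapping.keys g \<subseteq> {..<n}"
  shows "p dvd fact_ratio n (\<Sum>j<p. \<alpha>) (\<Sum>j<p. g)"
proof -
  obtain i where i: "i \<in> Poly_Mapping.keys g" using assms(2) by fastforce
  have "i < n" using i assms(3) by blast
  have "Poly_Mapping.lookup g i \<noteq> 0" using i by (simp add: in_keys_iff)
  have "p dvd fact (p * Poly_Mapping.lookup \<alpha> i + p * Poly_Mapping.lookup g i) div fact (p * Poly_Mapping.lookup \<alpha> i)"
    using prime_dvd_fact_quotient assms(1) \<open>Poly_Mapping.lookup g i \<noteq> 0\<close> by simp
  also have "\<dots> dvd fact_ratio n (\<Sum>j<p. \<alpha>) (\<Sum>j<p. g)"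
    unfolding fact_ratio_def lookup_sum_const using \<open>i < n\<close> by (intro dvd_prodI) auto
  finally show ?thesis .
qed

text \<open>By the Frobenius congruence
  only the terms \<open>U^(p g)\<close> matter modulo \<open>p\<close>, and those with \<open>g \<noteq> 0\<close> carry a factor \<open>p\<close> from
  the factorial ratio.\<close>

lemma weighted_power_congruence:
  assumes p: "prime p" and h: "in_vars n h" "coeffs_in (zring S) h"
  shows "\<exists>G \<in> zring S. weighted_sum (fact_ratio n (\<Sum>i<p. \<alpha>)) (h ^ p) =
    Poly_Mapping.lookup h 0 ^ p + of_nat p * G"
proof -
  define \<rho> where "\<rho> = fact_ratio n (\<Sum>i<p. \<alpha>)"
  define F where "F g = Poly_Mapping.lookup h g ^ p * of_nat (\<rho> (\<Sum>i<p. g))" for g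
  have p0: "p > 0" using prime_gt_0_nat[OF p] .
  obtain z where z: "coeffs_in (zring S) z" "h ^ p =
      (\<Sum>g\<in>Poly_Mapping.keys h. Poly_Mapping.single (\<Sum>i<p. g) (Poly_Mapping.lookup h g ^ p)) + of_nat p * z"
    using mpoly_frobenius[OF p h(2)] by blast
  have expand: "weighted_sum \<rho> (h ^ p) = (\<Sum>g\<in>Poly_Mapping.keys h. F g) + of_nat p * weighted_sum \<rho> z"
    unfolding z(2)
    by (simp add: F_def weighted_sum_add weighted_sum_sum weighted_sum_single weighted_sum_of_nat_mult)
  have F0: "F 0 = Poly_Mapping.lookup h 0 ^ p" by (simp add: F_def \<rho>_def fact_ratio_zero)
  have split: "(\<Sum>g\<in>Poly_Mapping.keys h. F g) = F 0 + (\<Sum>g\<in>Poly_Mapping.keys h - {0}. F g)"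
  proof (cases "0 \<in> Poly_Mapping.keys h")
    case True
    then show ?thesis by (simp add: sum.remove)
  next
    case False
    then have "F 0 = 0" using p0 by (simp add: F0 in_keys_iff)
    then show ?thesis using False by simp
  qed
  have divisible: "F g = of_nat p * (Poly_Mapping.lookup h g ^ p * of_nat (\<rho> (\<Sum>i<p. g) div p))"
    if "g \<in> Poly_Mapping.keys h - {0}" for g
  proof -
    have "Poly_Mapping.keys g \<subseteq> {..<n}" using h(1) that unfolding in_vars_def by blast
    then have "p dvd \<rho> (\<Sum>i<p. g)"
      unfolding \<rho>_def using prime_dvd_fact_ratio p0 that by blast
    then have "\<rho> (\<Sum>i<p. g) = p * (\<rho> (\<Sum>i<p. g) div p)" by simp
    then show ?thesis unfolding F_def by (metis mult.left_commute of_nat_mult)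
  qed
  define G where "G = (\<Sum>g\<in>Poly_Mapping.keys h - {0}. Poly_Mapping.lookup h g ^ p *
      of_nat (\<rho> (\<Sum>i<p. g) div p)) + weighted_sum \<rho> z"
  have "G \<in> zring S"
    unfolding G_def using h(2) unfolding coeffs_in_def
    by (intro zring.zring_add zring_sum zring.zring_mult zring_power zring_of_nat weighted_sum_in_zring z(1)) auto
  have factor_p: "(\<Sum>g\<in>Poly_Mapping.keys h - {0}. F g) = of_nat p *
      (\<Sum>g\<in>Poly_Mapping.keys h - {0}. Poly_Mapping.lookup h g ^ p * of_nat (\<rho> (\<Sum>i<p. g) div p))"
    unfolding sum_distrib_left by (rule sum.cong[OF refl divisible])
  have "weighted_sum \<rho> (h ^ p) = Poly_Mapping.lookup h 0 ^ p + of_nat p * G"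
    unfolding expand split F0 factor_p G_def by (simp add: algebra_simps)
  then show ?thesis using \<open>G \<in> zring S\<close> unfolding \<rho>_def by blast
qed

lemma LL_monomial_power:
  "LL n ((monomial \<alpha> * h) ^ p) =
     of_nat (fact_weight n (\<Sum>i<p. \<alpha>)) * weighted_sum (fact_ratio n (\<Sum>i<p. \<alpha>)) (h ^ p)"
proof -
  have "(monomial \<alpha> * h) ^ p = Poly_Mapping.single (\<Sum>i<p. \<alpha>) 1 * h ^ p"
    by (simp add: monomial_def power_mult_distrib single_power)
  then show ?thesis by (simp add: LL_monomial_times)
qed

lemma coeffs_in_own_coefficients:
  "coeffs_in (zring (Poly_Mapping.lookup h ` Poly_Mapping.keys h)) h"
  unfolding coeffs_in_def
proof
  fix k
  show "Poly_Mapping.lookup h k \<in> zring (Poly_Mapping.lookup h ` Poly_Mapping.keys h)"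
  proof (cases "k \<in> Poly_Mapping.keys h")
    case True
    then show ?thesis by (intro zring.zring_gen imageI)
  next
    case False
    then show ?thesis by (simp add: in_keys_iff zring_0)
  qed
qed

theorem proposition4p7:
  fixes n :: nat and \<alpha> :: "nat \<Rightarrow>\<^sub>0 nat" and h :: mpoly
  assumes "Poly_Mapping.keys \<alpha> \<subseteq> {..<n}"
    and "in_vars n h"
    and "Poly_Mapping.lookup h 0 \<noteq> 0"
  shows "\<exists>m\<ge>1. LL n ((monomial \<alpha> * h) ^ m) \<noteq> 0"
proof -
  define S where "S = Poly_Mapping.lookup h ` Poly_Mapping.keys h"
  define c where "c = Poly_Mapping.lookup h 0"
  have coeffs: "coeffs_in (zring S) h" unfolding S_def by (rule coeffs_in_own_coefficients)
  have c: "c \<in> zring S" "c \<noteq> 0" using coeffs assms(3) by (simp_all add: c_def coeffs_in_def)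
  obtain p where p: "prime p" "1 / of_nat p \<notin> zring (insert (1/c) S)"
    using prime_survives_finite[of S] c unfolding prime_survives_def S_def by auto
  obtain G where G: "G \<in> zring S" "weighted_sum (fact_ratio n (\<Sum>i<p. \<alpha>)) (h ^ p) = c ^ p + of_nat p * G"
    using weighted_power_congruence[OF p(1) assms(2) coeffs] unfolding c_def by blast
  have L_at_p: "LL n ((monomial \<alpha> * h) ^ p) = of_nat (fact_weight n (\<Sum>i<p. \<alpha>)) * (c ^ p + of_nat p * G)"
    unfolding LL_monomial_power G(2) ..
  have "c ^ p + of_nat p * G \<noteq> 0"
  proof
    assume "c ^ p + of_nat p * G = 0"
    then have "of_nat p * (- G) = c ^ p" by (simp add: add_eq_0_iff)
    then have "1 / of_nat p \<in> zring (insert (1/c) S)"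
      using zring_inverse_of_divisor zring_uminus[OF G(1)] c(2) by blast
    then show False using p(2) by simp
  qed
  moreover have "fact_weight n (\<Sum>i<p. \<alpha>) \<noteq> 0" by (simp add: fact_weight_def)
  ultimately show ?thesis using L_at_p prime_ge_1_nat[OF p(1)] by auto
qed

end
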